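(* Let $K$ be the field of fractions of a complete discrete valuation ring $\mathcal{O}$. In the coefficient-choosing game of degree $d = 2$ over $K$, whichever player makes the last move has a winning strategy.
   Context: The coefficient-choosing game of degree $d$ over $K$: Nora and Wanda alternately choose coefficients of $f(x) = a_d x^d + \cdots + a_0$; on each move the current player picks a not-yet-chosen coefficient and assigns it a value in $K$, subject to $a_d \neq 0$, $a_0 \neq 0$. After all $d+1$ coefficients are chosen, Wanda wins if $f$ has a root in $K$, and Nora wins otherwise. Who moves first is fixed in advance. *)

theory Defs
  imports Main "HOL-Computational_Algebra.Polynomial"
begin

text \<open>A discrete valuation on a field K: a map v from the nonzero elements of K onto the
integers (the value at 0 is irrelevant), multiplicative-to-additive and satisfying the
ultrametric inequality. Surjectivity onto the integers is normalised by the existence of a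
uniformiser (an element of value 1).\<close>

definition discrete_valuation :: "('a::field \<Rightarrow> int) \<Rightarrow> bool" where
  "discrete_valuation v \<longleftrightarrow>
     (\<forall>x y. x \<noteq> 0 \<longrightarrow> y \<noteq> 0 \<longrightarrow> v (x * y) = v x + v y) \<and>
     (\<forall>x y. x \<noteq> 0 \<longrightarrow> y \<noteq> 0 \<longrightarrow> x + y \<noteq> 0 \<longrightarrow> min (v x) (v y) \<le> v (x + y)) \<and>
     (\<exists>p. p \<noteq> 0 \<and> v p = 1)"

text \<open>Cauchy sequences and convergence for the v-adic metric (x is close to y iff
x = y or v(x - y) is large).\<close>

definition val_cauchy :: "('a::field \<Rightarrow> int) \<Rightarrow> (nat \<Rightarrow> 'a) \<Rightarrow> bool" where
  "val_cauchy v X \<longleftrightarrow>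
     (\<forall>N::int. \<exists>M. \<forall>m\<ge>M. \<forall>n\<ge>M. X m = X n \<or> N \<le> v (X m - X n))"

definition val_converges :: "('a::field \<Rightarrow> int) \<Rightarrow> (nat \<Rightarrow> 'a) \<Rightarrow> 'a \<Rightarrow> bool" where
  "val_converges v X L \<longleftrightarrow>
     (\<forall>N::int. \<exists>M. \<forall>n\<ge>M. X n = L \<or> N \<le> v (X n - L))"

text \<open>K (the ambient field type) is the fraction field of a complete DVR O iff it carries a
discrete valuation v for which it is complete; then O = {x. x = 0 \<or> 0 \<le> v x}.\<close>

definition complete_dvf :: "('a::field \<Rightarrow> int) \<Rightarrow> bool" where
  "complete_dvf v \<longleftrightarrow> discrete_valuation v \<and>
     (\<forall>X. val_cauchy v X \<longrightarrow> (\<exists>L. val_converges v X L))"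

datatype player = Nora | Wanda

fun other :: "player \<Rightarrow> player" where
  "other Nora = Wanda" | "other Wanda = Nora"

text \<open>A position: partial assignment of coefficients a_0..a_d (None = not yet chosen).
A legal move picks an unchosen index i \<le> d and a value c, with c \<noteq> 0 if i = 0 or i = d.\<close>

definition legal_move :: "nat \<Rightarrow> (nat \<Rightarrow> 'a::field option) \<Rightarrow> nat \<Rightarrow> 'a \<Rightarrow> bool" where
  "legal_move d s i c \<longleftrightarrow> i \<le> d \<and> s i = None \<and> ((i = 0 \<or> i = d) \<longrightarrow> c \<noteq> 0)"

definition final_poly :: "nat \<Rightarrow> (nat \<Rightarrow> 'a::field option) \<Rightarrow> 'a poly" where
  "final_poly d s = (\<Sum>i\<le>d. monom (the (s i)) i)"

definition wanda_wins_final :: "nat \<Rightarrow> (nat \<Rightarrow> 'a::field option) \<Rightarrow> bool" where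
  "wanda_wins_final d s \<longleftrightarrow> (\<exists>x. poly (final_poly d s) x = 0)"

text \<open>forces P d n s m: with n moves remaining from position s and player m to move,
player P has a strategy guaranteeing a win (a finite game, so this is the existence of a
winning strategy).\<close>

fun forces :: "player \<Rightarrow> nat \<Rightarrow> nat \<Rightarrow> (nat \<Rightarrow> 'a::field option) \<Rightarrow> player \<Rightarrow> bool" where
  "forces P d 0 s m =
     (if P = Wanda then wanda_wins_final d s else \<not> wanda_wins_final d s)"
| "forces P d (Suc n) s m =
     (if m = P then (\<exists>i c. legal_move d s i c \<and> forces P d n (s(i := Some c)) (other m))
      else (\<forall>i c. legal_move d s i c \<longrightarrow> forces P d n (s(i := Some c)) (other m)))"

definition has_winning_strategy :: "'a::field itself \<Rightarrow> player \<Rightarrow> nat \<Rightarrow> player \<Rightarrow> bool" where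
  "has_winning_strategy _ P d first \<longleftrightarrow>
     forces P d (Suc d) (\<lambda>_. None :: 'a option) first"

definition last_mover :: "nat \<Rightarrow> player \<Rightarrow> player" where
  "last_mover d first = (if odd (Suc d) then first else other first)"

end

theory Submission
  imports Defs
begin

text \<open>With three moves the first player also moves last. She opens with a_1 = 0; the
opponent then fixes one of a_0, a_2 to some e \<noteq> 0, and she answers on the other one.
Wanda answers -e, so that 1 is a root. Nora answers -e n for a non-square n, so that the
polynomial becomes e (1 - n x^2) or e (x^2 - n), neither of which has a root. A uniformiser p
gives the non-square n = -p, as v(-p) = 1 is odd.\<close>

definition wins :: "player \<Rightarrow> 'a::field poly \<Rightarrow> bool" where
  "wins P p \<longleftrightarrow> (P = Wanda \<longleftrightarrow> (\<exists>x. poly p x = 0))"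

lemma wins_Wanda: "wins Wanda p \<longleftrightarrow> (\<exists>x. poly p x = 0)"
  and wins_Nora: "wins Nora p \<longleftrightarrow> (\<forall>x. poly p x \<noteq> 0)"
  by (simp_all add: wins_def)

lemma forces_last_move:
  "forces P d (Suc 0) s P \<longleftrightarrow> (\<exists>i c. legal_move d s i c \<and> wins P (final_poly d (s(i := Some c))))"
  by (cases P) (simp_all add: wins_def wanda_wins_final_def)

lemma final_poly_2: "final_poly 2 s = [:the (s 0), the (s 1), the (s 2):]"
  by (simp add: final_poly_def numeral_2_eq_2 atMost_Suc monom_0 monom_Suc)

lemma forces_quadratic_by_zero_middle:
  fixes P :: player
  assumes reply: "\<And>e::'a::field. e \<noteq> 0 \<Longrightarrow>
    \<exists>f. f \<noteq> 0 \<and> wins P [:e, 0, f:] \<and> wins P [:f, 0, e:]"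
  shows "forces P 2 3 (\<lambda>_. None :: 'a option) P"
proof -
  let ?s = "(\<lambda>_. None :: 'a option)(1 := Some 0)"
  have "forces P 2 (Suc 0) (?s(j := Some e)) P" if "legal_move 2 ?s j e" for j e
  proof -
    from that have j: "j = 0 \<or> j = 2" and "e \<noteq> 0"
      by (auto simp: legal_move_def split: if_splits)
    then obtain f where f: "f \<noteq> 0" "wins P [:e, 0, f:]" "wins P [:f, 0, e:]"
      using reply by blast
    from j show ?thesis
    proof
      assume "j = 0"
      then have "legal_move 2 (?s(j := Some e)) 2 f"
        and "final_poly 2 (?s(j := Some e, 2 := Some f)) = [:e, 0, f:]"
        using f by (simp_all add: legal_move_def final_poly_2)
      then show ?thesis unfolding forces_last_move using f by metis
    next
      assume "j = 2"
      then have "legal_move 2 (?s(j := Some e)) 0 f"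
        and "final_poly 2 (?s(j := Some e, 0 := Some f)) = [:f, 0, e:]"
        using f by (simp_all add: legal_move_def final_poly_2)
      then show ?thesis unfolding forces_last_move using f by metis
    qed
  qed
  then have "forces P 2 (Suc (Suc 0)) ?s (other P)"
    by (cases P) auto
  moreover have "legal_move 2 (\<lambda>_. None :: 'a option) 1 0"
    by (simp add: legal_move_def)
  ultimately show ?thesis
    by (cases P) (auto simp: numeral_3_eq_3)
qed

lemma wanda_forces_quadratic: "forces Wanda 2 3 (\<lambda>_. None :: 'a::field option) Wanda"
proof (rule forces_quadratic_by_zero_middle)
  fix e :: 'a
  assume "e \<noteq> 0"
  moreover have "poly [:e, 0, - e:] 1 = 0" "poly [:- e, 0, e:] 1 = 0" by simp_all
  ultimately show "\<exists>f. f \<noteq> 0 \<and> wins Wanda [:e, 0, f:] \<and> wins Wanda [:f, 0, e:]"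
    unfolding wins_Wanda by (intro exI[of _ "- e"] conjI exI[of _ 1]) simp_all
qed

lemma nora_forces_quadratic:
  fixes n :: "'a::field"
  assumes non_square: "\<And>y. y\<^sup>2 \<noteq> n"
  shows "forces Nora 2 3 (\<lambda>_. None :: 'a option) Nora"
proof (rule forces_quadratic_by_zero_middle)
  fix e :: 'a
  assume "e \<noteq> 0"
  have "n \<noteq> 0" using non_square[of 0] by simp
  have "poly [:e, 0, - e * n:] x \<noteq> 0" for x
  proof
    assume "poly [:e, 0, - e * n:] x = 0"
    then have "e * (1 - n * x\<^sup>2) = 0" by (simp add: algebra_simps power2_eq_square)
    then have "(n * x)\<^sup>2 = n" using \<open>e \<noteq> 0\<close> by (simp add: power2_eq_square algebra_simps)
    then show False using non_square by blast
  qed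
  moreover have "poly [:- e * n, 0, e:] x \<noteq> 0" for x
  proof
    assume "poly [:- e * n, 0, e:] x = 0"
    then have "e * (x\<^sup>2 - n) = 0" by (simp add: algebra_simps power2_eq_square)
    then have "x\<^sup>2 = n" using \<open>e \<noteq> 0\<close> by simp
    then show False using non_square by blast
  qed
  ultimately show "\<exists>f. f \<noteq> 0 \<and> wins Nora [:e, 0, f:] \<and> wins Nora [:f, 0, e:]"
    unfolding wins_Nora using \<open>e \<noteq> 0\<close> \<open>n \<noteq> 0\<close> by (intro exI[of _ "- e * n"]) simp
qed

lemma discrete_valuation_power2:
  assumes "discrete_valuation v" "y \<noteq> 0"
  shows "v (y\<^sup>2) = 2 * v y"
  using assms by (simp add: discrete_valuation_def power2_eq_square)

lemma discrete_valuation_odd_not_square: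
  assumes "discrete_valuation v" "x \<noteq> 0" "odd (v x)"
  shows "y\<^sup>2 \<noteq> x"
proof
  assume "y\<^sup>2 = x"
  with assms have "v x = 2 * v y" by (auto simp: discrete_valuation_power2)
  with \<open>odd (v x)\<close> show False by simp
qed

lemma discrete_valuation_uminus:
  assumes "discrete_valuation v" "x \<noteq> 0"
  shows "v (- x) = v x"
proof -
  have mult: "\<And>a b. a \<noteq> 0 \<Longrightarrow> b \<noteq> 0 \<Longrightarrow> v (a * b) = v a + v b"
    using assms(1) by (simp add: discrete_valuation_def)
  have "v (1::'a) = 0" using mult[of 1 1] by simp
  moreover have "v (- 1 * - 1 :: 'a) = v (- 1) + v (- 1)" by (rule mult) simp_all
  ultimately have "v (- 1 :: 'a) = 0" by simp
  then show ?thesis using mult[of "- 1" x] assms(2) by simp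
qed

theorem lemma11:
  fixes v :: "'a::field \<Rightarrow> int" and first :: player
  assumes "complete_dvf v"
  shows "has_winning_strategy TYPE('a) (last_mover 2 first) 2 first"
proof (cases first)
  case Nora
  have "discrete_valuation v" using assms by (simp add: complete_dvf_def)
  then obtain p :: 'a where "p \<noteq> 0" "v p = 1" by (auto simp: discrete_valuation_def)
  with \<open>discrete_valuation v\<close> have "v (- p) = 1"
    using discrete_valuation_uminus by metis
  with \<open>discrete_valuation v\<close> \<open>p \<noteq> 0\<close> have "\<And>y. y\<^sup>2 \<noteq> - p"
    using discrete_valuation_odd_not_square[of v "- p"] by simp
  then show ?thesis
    using Nora nora_forces_quadratic[of "- p"] by (simp add: has_winning_strategy_def last_mover_def)
next
  case Wanda
  then show ?thesis
    using wanda_forces_quadratic by (simp add: has_winning_strategy_def last_mover_def)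
qed

end
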